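(* Let $Z=(\varphi^2-z_x\varphi-z_y)\,\varphi_\lambda^2$, where $\varphi_\lambda=d\varphi/d\lambda$. Then $Z$ is a formal Laurent series of the form $Z=\sum_{n\ge-4}Z^{(n)}\lambda^{n-2}$, with coefficients $Z^{(n)}$ functions on the covering $\bar\tau_*$, and each $Z^{(n)}$ is a shadow of a symmetry of the Gibbons–Tsarev equation in $\bar\tau_*$, i.e. $$\tilde D_y^2(Z^{(n)})+z_x\tilde D_x\tilde D_y(Z^{(n)})-z_y\tilde D_x^2(Z^{(n)})+z_{xy}\tilde D_x(Z^{(n)})-z_{xx}\tilde D_y(Z^{(n)})=0 .$$
   Context: The Gibbons–Tsarev equation $\mathcal E$ is $z_{yy}+z_xz_{xy}-z_yz_{xx}+1=0$ with internal coordinates $x,y,z_X$ ($z_X=\partial^{a+b}z/\partial x^a\partial y^b$, $X=x^ay^b$, $b\in\{0,1\}$) and total derivatives $D_x,D_y$. Put $\varphi^{(1)}=-y$, $\varphi^{(2)}=-x$, $\varphi^{(3)}=-z-\tfrac12y^2$, let $\varphi^{(k)}$, $k\ge4$, be new coordinates, and $\varphi(\lambda)=1/\lambda+\sum_{k\ge1}\varphi^{(k)}\lambda^k$. The covering $\bar\tau_*$ has coordinates $x,y,z_X,\varphi^{(k)}$ ($k\ge4$) and commuting total derivatives $\tilde D_x=D_x+\sum_{k\ge4}\varphi^{(k)}_x\partial/\partial\varphi^{(k)}$, $\tilde D_y=D_y+\sum_{k\ge4}\varphi^{(k)}_y\partial/\partial\varphi^{(k)}$, where the functions $\varphi^{(k)}_x,\varphi^{(k)}_y$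 (polynomials in $x,y,z,z_x,z_y,\varphi^{(4)},\dots,\varphi^{(k-1)}$) are uniquely determined by requiring that, with $\varphi_x=\sum_{k\ge1}\tilde D_x(\varphi^{(k)})\lambda^k$, $\varphi_y=\sum_{k\ge1}\tilde D_y(\varphi^{(k)})\lambda^k$, one has $(\varphi^2-z_x\varphi-z_y)\varphi_x=-1$ and $(\varphi^2-z_x\varphi-z_y)\varphi_y=-(\varphi-z_x)$ coefficientwise in $\lambda$. *)

theory Defs
  imports Complex_Main "HOL-Library.Poly_Mapping" "HOL-Computational_Algebra.Formal_Laurent_Series"
begin

text \<open>Zv a b stands for z_X with X = x^a y^b,
  where b = True means b = 1 and b = False means b = 0.  Phi k stands for the
  nonlocal coordinate phi^(k); only k \<ge> 4 are coordinates of the covering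
  (the variables Phi 0 .. Phi 3 are never used).\<close>
datatype var = Xv | Yv | Zv nat bool | Phi nat

text \<open>Functions on the covering: (real) polynomials in finitely many coordinates.\<close>
type_synonym jpoly = "(var \<Rightarrow>\<^sub>0 nat) \<Rightarrow>\<^sub>0 real"

definition cvar :: "var \<Rightarrow> jpoly" where
  "cvar v = Poly_Mapping.single (Poly_Mapping.single v 1) 1"

definition pconst :: "real \<Rightarrow> jpoly" where
  "pconst c = Poly_Mapping.single 0 c"

definition pvars :: "jpoly \<Rightarrow> var set" where
  "pvars p = (\<Union>m \<in> Poly_Mapping.keys p. Poly_Mapping.keys m)"

definition pderivv :: "var \<Rightarrow> jpoly \<Rightarrow> jpoly" where
  "pderivv v p = Abs_poly_mapping (\<lambda>m.
      of_nat (Poly_Mapping.lookup m v + 1) * Poly_Mapping.lookup p (m + Poly_Mapping.single v 1))"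

definition derivation :: "(var \<Rightarrow> jpoly) \<Rightarrow> jpoly \<Rightarrow> jpoly" where
  "derivation g p = (\<Sum>v \<in> pvars p. g v * pderivv v p)"

text \<open>Total derivative D_x on the equation (without nonlocal part), on internal
  coordinates x, y, z_X.\<close>
definition genDx :: "var \<Rightarrow> jpoly" where
  "genDx v = (case v of Xv \<Rightarrow> 1 | Yv \<Rightarrow> 0 | Zv a b \<Rightarrow> cvar (Zv (Suc a) b) | Phi k \<Rightarrow> 0)"

text \<open>z_yy expressed from the Gibbons-Tsarev equation
  z_yy + z_x z_xy - z_y z_xx + 1 = 0.\<close>
definition zyy :: jpoly where
  "zyy = cvar (Zv 0 True) * cvar (Zv 2 False) - cvar (Zv 1 False) * cvar (Zv 1 True) - 1"

text \<open>Lifted total derivatives on the covering, given the functions phi^(k)_x, phi^(k)_y.\<close>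
definition tDx :: "(nat \<Rightarrow> jpoly) \<Rightarrow> jpoly \<Rightarrow> jpoly" where
  "tDx phx = derivation (\<lambda>v. case v of Xv \<Rightarrow> 1 | Yv \<Rightarrow> 0
       | Zv a b \<Rightarrow> cvar (Zv (Suc a) b)
       | Phi k \<Rightarrow> (if 4 \<le> k then phx k else 0))"

definition tDy :: "(nat \<Rightarrow> jpoly) \<Rightarrow> jpoly \<Rightarrow> jpoly" where
  "tDy phy = derivation (\<lambda>v. case v of Xv \<Rightarrow> 0 | Yv \<Rightarrow> 1
       | Zv a b \<Rightarrow> (if b then (derivation genDx ^^ a) zyy else cvar (Zv a True))
       | Phi k \<Rightarrow> (if 4 \<le> k then phy k else 0))"

definition phic :: "nat \<Rightarrow> jpoly" where
  "phic k = (if k = 1 then - cvar Yv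
             else if k = 2 then - cvar Xv
             else if k = 3 then - cvar (Zv 0 False) - pconst (1/2) * cvar Yv ^ 2
             else cvar (Phi k))"

definition phiL :: "jpoly fls" where
  "phiL = fls_X_inv + fps_to_fls (Abs_fps (\<lambda>k. if k = 0 then 0 else phic k))"

definition phiD :: "(jpoly \<Rightarrow> jpoly) \<Rightarrow> jpoly fls" where
  "phiD D = fps_to_fls (Abs_fps (\<lambda>k. if k = 0 then 0 else D (phic k)))"

definition zx :: jpoly where "zx = cvar (Zv 1 False)"
definition zy :: jpoly where "zy = cvar (Zv 0 True)"
definition zxx :: jpoly where "zxx = cvar (Zv 2 False)"
definition zxy :: jpoly where "zxy = cvar (Zv 1 True)"

definition Pfac :: "jpoly fls" where
  "Pfac = phiL ^ 2 - fls_const zx * phiL - fls_const zy"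

definition covering_data :: "(nat \<Rightarrow> jpoly) \<Rightarrow> (nat \<Rightarrow> jpoly) \<Rightarrow> bool" where
  "covering_data phx phy \<longleftrightarrow>
     (\<forall>k\<ge>4. pvars (phx k) \<union> pvars (phy k) \<subseteq>
               {Xv, Yv, Zv 0 False, Zv 1 False, Zv 0 True} \<union> Phi ` {4..<k})
   \<and> Pfac * phiD (tDx phx) = - 1
   \<and> Pfac * phiD (tDy phy) = - (phiL - fls_const zx)"

definition Zser :: "jpoly fls" where
  "Zser = Pfac * (fls_deriv phiL) ^ 2"

end

theory Submission
  imports Defs
begin

text \<open>Write \<open>P = \<phi>\<^sup>2 - z\<^sub>x \<phi> - z\<^sub>y\<close>, \<open>R = - \<phi>\<^sub>x\<close> and \<open>\<psi> = \<phi>\<^sub>\<lambda>\<close>, so that the covering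
  says \<open>P R = 1\<close> and \<open>\<phi>\<^sub>y = -(\<phi> - z\<^sub>x) R\<close>.  Differentiating these relations in \<open>\<lambda>\<close>
  gives \<open>\<psi>\<^sub>x = w R\<^sup>2 \<psi>\<close> and \<open>\<psi>\<^sub>y = ((\<phi> - z\<^sub>x) w R - 1) R \<psi>\<close> with \<open>w = 2\<phi> - z\<^sub>x\<close>,
  so \<open>Z = P \<psi>\<^sup>2\<close> and all its total derivatives are \<open>\<psi>\<^sup>2\<close> times polynomials in
  \<open>\<phi>\<close>, \<open>R\<close> and the jet coordinates.  The linearised Gibbons-Tsarev operator applied
  to \<open>Z\<close> turns out to be
  \<open>\<psi>\<^sup>2 (3 w\<^sup>2 R\<^sup>2 + (z\<^sub>x z\<^sub>x\<^sub>x - z\<^sub>x\<^sub>y) w R - 2R - 2z\<^sub>x\<^sub>x) (P R - 1) = 0\<close>.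
  This is an identity in any commutative ring with three derivations; it is applied
  to Laurent series in \<open>\<lambda>\<close> over the polynomial functions on the covering, on which
  the total derivatives act coefficientwise.  Since \<open>P\<close> and \<open>\<psi>\<close> have order at least
  \<open>-2\<close>, \<open>Z\<close> has order at least \<open>-6\<close>.\<close>

unbundle fps_syntax

section \<open>Derivations of a commutative ring\<close>

definition is_derivation :: "('a::comm_ring_1 \<Rightarrow> 'a) \<Rightarrow> bool" where
  "is_derivation D \<longleftrightarrow>
     (\<forall>x y. D (x + y) = D x + D y) \<and> (\<forall>x y. D (x * y) = x * D y + D x * y)"

lemma derivation_add: "is_derivation D \<Longrightarrow> D (x + y) = D x + D y"
  by (simp add: is_derivation_def)

lemma derivation_mult: "is_derivation D \<Longrightarrow> D (x * y) = x * D y + D x * y"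
  by (simp add: is_derivation_def)

lemma derivation_0: "is_derivation D \<Longrightarrow> D 0 = 0"
  using derivation_add[of D 0 0] by simp

lemma derivation_uminus: "is_derivation D \<Longrightarrow> D (- x) = - D x"
  using derivation_add[of D x "- x"] derivation_0[of D] by (simp add: add_eq_0_iff2)

lemma derivation_diff: "is_derivation D \<Longrightarrow> D (x - y) = D x - D y"
  using derivation_add[of D x "- y"] derivation_uminus[of D y] by simp

lemma derivation_1: "is_derivation D \<Longrightarrow> D 1 = 0"
  using derivation_mult[of D 1 1] by simp

lemma derivation_of_nat: "is_derivation D \<Longrightarrow> D (of_nat n) = 0"
  by (induction n) (simp_all add: derivation_add derivation_1 derivation_0)

lemma derivation_numeral: "is_derivation D \<Longrightarrow> D (numeral k) = 0"
  using derivation_of_nat[of D "numeral k"] by simp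

lemma derivation_of_int: "is_derivation D \<Longrightarrow> D (of_int k) = 0"
  by (cases k rule: int_cases)
    (simp_all add: derivation_of_nat derivation_uminus derivation_diff derivation_1)

lemma derivation_power2: "is_derivation D \<Longrightarrow> D (x ^ 2) = 2 * x * D x"
  by (simp add: power2_eq_square derivation_mult algebra_simps)

lemma derivation_sum: "is_derivation D \<Longrightarrow> D (sum f S) = (\<Sum>s\<in>S. D (f s))"
  by (induction S rule: infinite_finite_induct) (simp_all add: derivation_0 derivation_add)

lemma derivation_inverse:
  assumes "is_derivation D" and "p * r = 1"
  shows "D r = - (r ^ 2 * D p)"
proof -
  have "p * D r = - (D p * r)"
    using assms derivation_mult[of D p r] by (simp add: derivation_1 add_eq_0_iff2)
  have "D r = (p * r) * D r"
    by (simp only: assms(2) mult_1)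
  also have "\<dots> = r * (p * D r)"
    by (simp add: algebra_simps)
  also have "\<dots> = - (r ^ 2 * D p)"
    using \<open>p * D r = - (D p * r)\<close> by (simp add: algebra_simps power2_eq_square)
  finally show ?thesis .
qed

definition gt_linearized ::
    "('a \<Rightarrow> 'a) \<Rightarrow> ('a \<Rightarrow> 'a) \<Rightarrow> 'a \<Rightarrow> 'a \<Rightarrow> 'a \<Rightarrow> 'a \<Rightarrow> 'a \<Rightarrow> 'a::comm_ring_1" where
  "gt_linearized dx dy Zx Zy Zxx Zxy f =
     dy (dy f) + Zx * dx (dy f) - Zy * dx (dx f) + Zxy * dx f - Zxx * dy f"

text \<open>An algebraic model of the covering: \<open>dl\<close> plays the role of \<open>\<partial>/\<partial>\<lambda>\<close>, \<open>R\<close> that of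
  \<open>-\<phi>\<^sub>x = 1/P\<close>, and \<open>Zxxx\<close>, \<open>Zxxy\<close> that of \<open>z\<^sub>x\<^sub>x\<^sub>x\<close>, \<open>z\<^sub>x\<^sub>x\<^sub>y\<close>; \<open>dy Zy\<close> is \<open>z\<^sub>y\<^sub>y\<close> taken from the
  equation.\<close>

locale gt_covering_ring =
  fixes dx dy dl :: "'a::comm_ring_1 \<Rightarrow> 'a"
    and Zx Zy Zxx Zxy Zxxx Zxxy phi psi P R :: 'a
  assumes dx_derivation: "is_derivation dx"
    and dy_derivation: "is_derivation dy"
    and dl_derivation: "is_derivation dl"
    and dl_dx_commute: "\<And>f. dl (dx f) = dx (dl f)"
    and dl_dy_commute: "\<And>f. dl (dy f) = dy (dl f)"
    and P_eq: "P = phi ^ 2 - Zx * phi - Zy"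
    and P_R: "P * R = 1"
    and dx_phi: "dx phi = - R"
    and dy_phi: "dy phi = - ((phi - Zx) * R)"
    and dl_phi: "dl phi = psi"
    and dl_Zx: "dl Zx = 0" and dl_Zy: "dl Zy = 0"
    and dx_Zx: "dx Zx = Zxx" and dy_Zx: "dy Zx = Zxy"
    and dx_Zy: "dx Zy = Zxy" and dy_Zy: "dy Zy = Zy * Zxx - Zx * Zxy - 1"
    and dx_Zxx: "dx Zxx = Zxxx" and dy_Zxx: "dy Zxx = Zxxy"
    and dx_Zxy: "dx Zxy = Zxxy" and dy_Zxy: "dy Zxy = Zy * Zxxx - Zx * Zxxy"
begin

lemmas dx_rules = derivation_add[OF dx_derivation] derivation_diff[OF dx_derivation]
  derivation_mult[OF dx_derivation] derivation_uminus[OF dx_derivation]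
  derivation_power2[OF dx_derivation] derivation_numeral[OF dx_derivation]
lemmas dy_rules = derivation_add[OF dy_derivation] derivation_diff[OF dy_derivation]
  derivation_mult[OF dy_derivation] derivation_uminus[OF dy_derivation]
  derivation_power2[OF dy_derivation] derivation_numeral[OF dy_derivation]
lemmas dl_rules = derivation_add[OF dl_derivation] derivation_diff[OF dl_derivation]
  derivation_mult[OF dl_derivation] derivation_uminus[OF dl_derivation]
  derivation_power2[OF dl_derivation]

lemma dl_R: "dl R = - ((2 * phi - Zx) * R ^ 2 * psi)"
proof -
  have dl_P: "dl P = (2 * phi - Zx) * psi"
    unfolding P_eq by (simp add: dl_rules dl_phi dl_Zx dl_Zy algebra_simps)
  show ?thesis
    by (simp only: derivation_inverse[OF dl_derivation P_R] dl_P) (simp add: algebra_simps)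
qed

lemma dx_psi: "dx psi = (2 * phi - Zx) * R ^ 2 * psi"
proof -
  have "dx psi = dl (dx phi)" by (simp add: dl_dx_commute dl_phi)
  then show ?thesis by (simp add: dx_phi dl_rules dl_R)
qed

lemma dy_psi: "dy psi = ((phi - Zx) * (2 * phi - Zx) * R - 1) * R * psi"
proof -
  have "dy psi = dl (dy phi)" by (simp add: dl_dy_commute dl_phi)
  then show ?thesis by (simp add: dy_phi dl_phi dl_rules dl_R dl_Zx algebra_simps power2_eq_square)
qed

lemma dx_P: "dx P = - ((2 * phi - Zx) * R) - Zxx * phi - Zxy"
  unfolding P_eq by (simp add: dx_rules dx_phi dx_Zx dx_Zy algebra_simps)

lemma dy_P: "dy P = - ((phi - Zx) * (2 * phi - Zx) * R) - Zxy * phi - Zy * Zxx + Zx * Zxy + 1"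
  unfolding P_eq by (simp add: dy_rules dy_phi dy_Zx dy_Zy algebra_simps)

lemma dx_R: "dx R = ((2 * phi - Zx) * R + Zxx * phi + Zxy) * R ^ 2"
  using derivation_inverse[OF dx_derivation P_R] by (simp add: dx_P algebra_simps)

lemma dy_R: "dy R = ((phi - Zx) * (2 * phi - Zx) * R + Zxy * phi + Zy * Zxx - Zx * Zxy - 1) * R ^ 2"
  using derivation_inverse[OF dy_derivation P_R] by (simp add: dy_P algebra_simps)

lemma dx_Z: "dx (P * psi ^ 2) = ((2 * phi - Zx) * R - Zxx * phi - Zxy) * psi ^ 2"
proof -
  have "dx (P * psi ^ 2) = (dx P + 2 * (2 * phi - Zx) * (P * R) * R) * psi ^ 2"
    by (simp add: dx_rules dx_psi algebra_simps power2_eq_square)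
  then show ?thesis by (simp add: P_R dx_P algebra_simps)
qed

lemma dy_Z: "dy (P * psi ^ 2) =
    ((phi - Zx) * (2 * phi - Zx) * R - Zxy * phi - Zy * Zxx + Zx * Zxy - 1) * psi ^ 2"
proof -
  have "dy (P * psi ^ 2) = (dy P + 2 * ((phi - Zx) * (2 * phi - Zx) * R - 1) * (P * R)) * psi ^ 2"
    by (simp add: dy_rules dy_psi algebra_simps power2_eq_square)
  then show ?thesis by (simp add: P_R dy_P algebra_simps)
qed

lemma gt_linearized_Z:
  "gt_linearized dx dy Zx Zy Zxx Zxy (P * psi ^ 2) =
     (3 * (2 * phi - Zx) ^ 2 * R ^ 2 + (Zx * Zxx - Zxy) * (2 * phi - Zx) * R - 2 * R - 2 * Zxx)
     * (P * R - 1) * psi ^ 2"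
  unfolding gt_linearized_def dx_Z dy_Z
  by (simp only: dx_rules dy_rules dx_psi dy_psi dx_phi dy_phi dx_R dy_R dx_Zx dy_Zx dx_Zy dy_Zy
      dx_Zxx dy_Zxx dx_Zxy dy_Zxy derivation_1[OF dx_derivation] derivation_1[OF dy_derivation])
    (simp add: P_eq algebra_simps power2_eq_square power3_eq_cube)

lemma gt_linearized_Z_eq_0: "gt_linearized dx dy Zx Zy Zxx Zxy (P * psi ^ 2) = 0"
  by (simp add: gt_linearized_Z P_R)

end

section \<open>Partial derivatives of polynomials\<close>

lemma finite_pderivv_support:
  "finite {m. of_nat (Poly_Mapping.lookup m v + 1)
               * Poly_Mapping.lookup (p::jpoly) (m + Poly_Mapping.single v 1) \<noteq> 0}"
proof (rule finite_subset)
  show "finite ((\<lambda>m. m + Poly_Mapping.single v 1) -` Poly_Mapping.keys p)"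
    by (rule finite_vimageI) (auto simp: inj_on_def)
qed (auto simp: in_keys_iff)

lemma lookup_pderivv: "Poly_Mapping.lookup (pderivv v p) m =
   of_nat (Poly_Mapping.lookup m v + 1) * Poly_Mapping.lookup p (m + Poly_Mapping.single v 1)"
  unfolding pderivv_def using finite_pderivv_support[of v p] by simp

lemma pderivv_add: "pderivv v (p + q) = pderivv v p + pderivv v q"
  by (rule poly_mapping_eqI) (simp add: lookup_pderivv lookup_add distrib_left)

lemma pderivv_0: "pderivv v 0 = 0"
  by (rule poly_mapping_eqI) (simp add: lookup_pderivv)

lemma pderivv_sum: "pderivv v (sum f S) = (\<Sum>s\<in>S. pderivv v (f s))"
  by (induction S rule: infinite_finite_induct) (simp_all add: pderivv_0 pderivv_add)

lemma pderivv_single: "pderivv v (Poly_Mapping.single a c) =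
   Poly_Mapping.single (a - Poly_Mapping.single v 1) (of_nat (Poly_Mapping.lookup a v) * c)"
proof (rule poly_mapping_eqI)
  fix m
  show "Poly_Mapping.lookup (pderivv v (Poly_Mapping.single a c)) m =
        Poly_Mapping.lookup (Poly_Mapping.single (a - Poly_Mapping.single v 1)
          (of_nat (Poly_Mapping.lookup a v) * c)) m"
  proof (cases "a = m + Poly_Mapping.single v 1")
    case True
    then have "a - Poly_Mapping.single v 1 = m"
      by (simp add: poly_mapping_eqI lookup_minus lookup_add)
    then show ?thesis using True by (simp add: lookup_pderivv lookup_single lookup_add)
  next
    case False
    have "a - Poly_Mapping.single v 1 \<noteq> m" if "Poly_Mapping.lookup a v \<noteq> 0"
    proof
      assume m: "a - Poly_Mapping.single v 1 = m"
      have "a = m + Poly_Mapping.single v 1"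
      proof (rule poly_mapping_eqI)
        fix k show "Poly_Mapping.lookup a k = Poly_Mapping.lookup (m + Poly_Mapping.single v 1) k"
          using that unfolding m[symmetric]
          by (cases "k = v") (auto simp: lookup_add lookup_minus lookup_single)
      qed
      with False show False by simp
    qed
    then show ?thesis using False
      by (auto simp: lookup_pderivv lookup_single when_def)
  qed
qed

lemma pderivv_mult_single: "pderivv v (Poly_Mapping.single a c * Poly_Mapping.single b d) =
   Poly_Mapping.single a c * pderivv v (Poly_Mapping.single b d)
   + pderivv v (Poly_Mapping.single a c) * Poly_Mapping.single b d"
proof -
  define e where "e = Poly_Mapping.single v (1::nat)"
  have lookup_e: "Poly_Mapping.lookup e k = (if k = v then 1 else 0)" for k
    by (simp add: e_def lookup_single when_def)
  have right: "Poly_Mapping.single (a + b - e) (of_nat (Poly_Mapping.lookup b v) * (c * d))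
         = Poly_Mapping.single (a + (b - e)) (c * (of_nat (Poly_Mapping.lookup b v) * d))"
  proof (cases "Poly_Mapping.lookup b v = 0")
    case False
    then have "a + b - e = a + (b - e)"
      by (intro poly_mapping_eqI) (simp add: lookup_add lookup_minus lookup_e)
    then show ?thesis by (simp add: algebra_simps)
  qed simp
  have left: "Poly_Mapping.single (a + b - e) (of_nat (Poly_Mapping.lookup a v) * (c * d))
         = Poly_Mapping.single (a - e + b) (of_nat (Poly_Mapping.lookup a v) * c * d)"
  proof (cases "Poly_Mapping.lookup a v = 0")
    case False
    then have "a + b - e = a - e + b"
      by (intro poly_mapping_eqI) (simp add: lookup_add lookup_minus lookup_e)
    then show ?thesis by (simp add: algebra_simps)
  qed simp
  have "pderivv v (Poly_Mapping.single a c * Poly_Mapping.single b d) =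
     Poly_Mapping.single (a + b - e) (of_nat (Poly_Mapping.lookup a v) * (c * d)) +
     Poly_Mapping.single (a + b - e) (of_nat (Poly_Mapping.lookup b v) * (c * d))"
    by (simp add: mult_single pderivv_single e_def lookup_add distrib_right flip: single_add)
  then show ?thesis
    unfolding right left by (simp add: mult_single pderivv_single e_def add.commute)
qed

lemma poly_mapping_sum_single:
  "p = (\<Sum>a\<in>Poly_Mapping.keys p. Poly_Mapping.single a (Poly_Mapping.lookup p a))"
  by (rule poly_mapping_eqI) (simp add: lookup_sum lookup_single when_def in_keys_iff)

lemma pderivv_mult: "pderivv v ((p::jpoly) * q) = p * pderivv v q + pderivv v p * q"
proof -
  define s where "s a = Poly_Mapping.single a (Poly_Mapping.lookup p a)" for a
  define t where "t b = Poly_Mapping.single b (Poly_Mapping.lookup q b)" for b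
  let ?K = "Poly_Mapping.keys p" and ?L = "Poly_Mapping.keys q"
  have "pderivv v (sum s ?K * sum t ?L) = (\<Sum>a\<in>?K. \<Sum>b\<in>?L. pderivv v (s a * t b))"
    by (simp only: sum_product pderivv_sum)
  also have "\<dots> = (\<Sum>a\<in>?K. \<Sum>b\<in>?L. s a * pderivv v (t b) + pderivv v (s a) * t b)"
    by (simp only: s_def t_def pderivv_mult_single)
  also have "\<dots> = sum s ?K * pderivv v (sum t ?L) + pderivv v (sum s ?K) * sum t ?L"
    by (simp only: sum.distrib sum_product pderivv_sum)
  finally show ?thesis
    unfolding s_def t_def by (simp flip: poly_mapping_sum_single)
qed

lemma pderivv_eq_0: "v \<notin> pvars p \<Longrightarrow> pderivv v p = 0"
proof (rule poly_mapping_eqI)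
  fix m :: "var \<Rightarrow>\<^sub>0 nat"
  assume v: "v \<notin> pvars p"
  have "v \<in> Poly_Mapping.keys (m + Poly_Mapping.single v 1)"
    by (simp add: in_keys_iff lookup_add)
  then have "m + Poly_Mapping.single v 1 \<notin> Poly_Mapping.keys p"
    using v unfolding pvars_def by blast
  then show "Poly_Mapping.lookup (pderivv v p) m = Poly_Mapping.lookup 0 m"
    by (simp add: lookup_pderivv in_keys_iff)
qed

lemma finite_pvars: "finite (pvars p)"
  unfolding pvars_def by auto

lemma pvars_add: "pvars (p + q) \<subseteq> pvars p \<union> pvars q"
  unfolding pvars_def using keys_add[of p q] by blast

lemma pvars_mult: "pvars (p * q) \<subseteq> pvars p \<union> pvars q"
  unfolding pvars_def using keys_mult[of p q] by (force simp: in_keys_iff lookup_add)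

lemma derivation_eq_sum_superset:
  "finite S \<Longrightarrow> pvars p \<subseteq> S \<Longrightarrow> derivation g p = (\<Sum>v\<in>S. g v * pderivv v p)"
  unfolding derivation_def by (rule sum.mono_neutral_left) (auto simp: pderivv_eq_0)

lemma derivation_is_derivation: "is_derivation (derivation g)"
  unfolding is_derivation_def
proof (intro conjI allI)
  fix x y :: jpoly
  let ?S = "pvars x \<union> pvars y"
  have S: "finite ?S" by (simp add: finite_pvars)
  note sum_S = derivation_eq_sum_superset[OF S]
  show "derivation g (x + y) = derivation g x + derivation g y"
    using sum_S[of x g] sum_S[of y g] sum_S[of "x + y" g] pvars_add[of x y]
    by (simp add: pderivv_add distrib_left sum.distrib)
  show "derivation g (x * y) = x * derivation g y + derivation g x * y"
    using sum_S[of x g] sum_S[of y g] sum_S[of "x * y" g] pvars_mult[of x y]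
    by (simp add: pderivv_mult distrib_left sum.distrib sum_distrib_left sum_distrib_right
        algebra_simps)
qed

lemma derivation_cvar: "derivation g (cvar v) = g v"
proof -
  have "pvars (cvar v) = {v}"
    by (simp add: pvars_def cvar_def)
  moreover have "pderivv v (cvar v) = 1"
    by (simp add: cvar_def pderivv_single flip: single_one)
  ultimately show ?thesis by (simp add: derivation_def)
qed

section \<open>Coefficientwise derivations of Laurent series\<close>

definition fls_map_coeffs :: "('a \<Rightarrow> 'a) \<Rightarrow> 'a::zero fls \<Rightarrow> 'a fls" where
  "fls_map_coeffs D f = Abs_fls (\<lambda>n. D (f $$ n))"

lemma fls_map_coeffs_nth: "D 0 = 0 \<Longrightarrow> fls_map_coeffs D f $$ n = D (f $$ n)"
proof -
  assume "D 0 = 0"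
  obtain N where "\<forall>n<N. f $$ n = 0" by (elim fls_nth_vanishes_belowE)
  with \<open>D 0 = 0\<close> have "\<forall>n<N. D (f $$ n) = 0" by simp
  then show ?thesis unfolding fls_map_coeffs_def by (rule nth_Abs_fls_lower_bound)
qed

definition fls_vanishes_below :: "int \<Rightarrow> 'a::zero fls \<Rightarrow> bool" where
  "fls_vanishes_below N f \<longleftrightarrow> (\<forall>n<N. f $$ n = 0)"

lemma fls_vanishes_below_ex: "\<exists>N. fls_vanishes_below N f"
  unfolding fls_vanishes_below_def by (rule fls_nth_vanishes_belowE) blast

lemma fls_times_nth_vanishes_below:
  fixes f g :: "'a::comm_ring_1 fls"
  assumes f: "fls_vanishes_below N f" and g: "fls_vanishes_below M g"
  shows "(f * g) $$ n = (\<Sum>i=N..n - M. f $$ i * g $$ (n - i))"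
proof (cases "f = 0 \<or> g = 0")
  case True then show ?thesis by auto
next
  case False
  then have "N \<le> fls_subdegree f" "M \<le> fls_subdegree g"
    using f g by (auto intro: fls_subdegree_geI simp: fls_vanishes_below_def)
  have "(f * g) $$ n = (\<Sum>i=fls_subdegree f..n - fls_subdegree g. f $$ i * g $$ (n - i))"
    by (rule fls_times_nth(2))
  also have "\<dots> = (\<Sum>i=N..n - M. f $$ i * g $$ (n - i))"
    by (rule sum.mono_neutral_left)
      (use \<open>N \<le> fls_subdegree f\<close> \<open>M \<le> fls_subdegree g\<close> in \<open>auto simp: not_le\<close>)
  finally show ?thesis .
qed

lemma fls_vanishes_below_mult:
  fixes f g :: "'a::comm_ring_1 fls"
  shows "fls_vanishes_below N f \<Longrightarrow> fls_vanishes_below M g \<Longrightarrow>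
    fls_vanishes_below (N + M) (f * g)"
  by (simp add: fls_vanishes_below_def fls_times_nth_vanishes_below)

lemma fls_vanishes_below_diff:
  "fls_vanishes_below N f \<Longrightarrow> fls_vanishes_below N g \<Longrightarrow> fls_vanishes_below N (f - g)"
  by (simp add: fls_vanishes_below_def)

lemma fls_vanishes_below_mono:
  "fls_vanishes_below N f \<Longrightarrow> M \<le> N \<Longrightarrow> fls_vanishes_below M f"
  by (simp add: fls_vanishes_below_def)

lemma fls_vanishes_below_const: "fls_vanishes_below 0 (fls_const c)"
  by (simp add: fls_vanishes_below_def)

lemma fls_vanishes_below_deriv:
  "fls_vanishes_below N f \<Longrightarrow> fls_vanishes_below (N - 1) (fls_deriv f)"
  by (simp add: fls_vanishes_below_def)

lemma fls_map_coeffs_derivation: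
  fixes D :: "'a::comm_ring_1 \<Rightarrow> 'a"
  assumes D: "is_derivation D"
  shows "is_derivation (fls_map_coeffs D)"
  unfolding is_derivation_def
proof (intro conjI allI)
  note nth = fls_map_coeffs_nth[of D, OF derivation_0[OF D]]
  fix f g :: "'a fls"
  show "fls_map_coeffs D (f + g) = fls_map_coeffs D f + fls_map_coeffs D g"
    by (rule fls_eqI) (simp add: nth derivation_add[OF D])
  obtain N M where N: "fls_vanishes_below N f" and M: "fls_vanishes_below M g"
    using fls_vanishes_below_ex by blast
  then have N': "fls_vanishes_below N (fls_map_coeffs D f)"
    and M': "fls_vanishes_below M (fls_map_coeffs D g)"
    by (simp_all add: fls_vanishes_below_def nth derivation_0[OF D])
  show "fls_map_coeffs D (f * g) = f * fls_map_coeffs D g + fls_map_coeffs D f * g"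
    by (rule fls_eqI)
      (simp add: nth fls_times_nth_vanishes_below[OF N M] fls_times_nth_vanishes_below[OF N M']
        fls_times_nth_vanishes_below[OF N' M] derivation_sum[OF D] derivation_mult[OF D] sum.distrib)
qed

lemma fls_deriv_derivation: "is_derivation (fls_deriv :: 'a::comm_ring_1 fls \<Rightarrow> 'a fls)"
  unfolding is_derivation_def by simp

lemma fls_deriv_map_coeffs:
  assumes D: "is_derivation D"
  shows "fls_deriv (fls_map_coeffs D f) = fls_map_coeffs D (fls_deriv f)"
proof (rule fls_eqI)
  fix n
  have "D (of_int (n + 1) * f $$ (n + 1)) = of_int (n + 1) * D (f $$ (n + 1))"
    by (simp only: derivation_mult[OF D] derivation_of_int[OF D]) simp
  then show "fls_deriv (fls_map_coeffs D f) $$ n = fls_map_coeffs D (fls_deriv f) $$ n"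
    by (simp only: fls_map_coeffs_nth[of D, OF derivation_0[OF D]] fls_deriv_nth)
qed

lemma fls_map_coeffs_const:
  "is_derivation D \<Longrightarrow> fls_map_coeffs D (fls_const c) = fls_const (D c)"
  by (rule fls_eqI) (simp add: fls_map_coeffs_nth derivation_0)

lemma fls_nth_gt_linearized:
  assumes "is_derivation Dx" and "is_derivation Dy"
  shows "gt_linearized (fls_map_coeffs Dx) (fls_map_coeffs Dy)
           (fls_const p) (fls_const q) (fls_const r) (fls_const s) f $$ n
         = gt_linearized Dx Dy p q r s (f $$ n)"
  using assms by (simp add: gt_linearized_def fls_map_coeffs_nth derivation_0)

section \<open>The covering\<close>

lemma tDx_derivation: "is_derivation (tDx phx)"
  unfolding tDx_def by (rule derivation_is_derivation)

lemma tDy_derivation: "is_derivation (tDy phy)"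
  unfolding tDy_def by (rule derivation_is_derivation)

lemma tDx_jet:
  "tDx phx zx = zxx" "tDx phx zy = zxy" "tDx phx zxx = cvar (Zv 3 False)"
  "tDx phx zxy = cvar (Zv 2 True)"
  by (simp_all add: tDx_def derivation_cvar zx_def zy_def zxx_def zxy_def numeral_eq_Suc)

lemma tDy_jet:
  "tDy phy zx = zxy" "tDy phy zy = zy * zxx - zx * zxy - 1" "tDy phy zxx = cvar (Zv 2 True)"
  "tDy phy zxy = zy * cvar (Zv 3 False) - zx * cvar (Zv 2 True)"
proof -
  have "derivation genDx zyy = zy * cvar (Zv 3 False) - zx * cvar (Zv 2 True)"
    unfolding zyy_def
    by (simp add: derivation_diff derivation_mult derivation_1 derivation_is_derivation
        derivation_cvar)
       (simp add: genDx_def zy_def zx_def algebra_simps numeral_eq_Suc)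
  then show "tDy phy zx = zxy" "tDy phy zy = zy * zxx - zx * zxy - 1"
    "tDy phy zxx = cvar (Zv 2 True)" "tDy phy zxy = zy * cvar (Zv 3 False) - zx * cvar (Zv 2 True)"
    by (simp_all add: tDy_def derivation_cvar zx_def zy_def zxx_def zxy_def zyy_def numeral_eq_Suc)
qed

lemma fls_map_coeffs_phiL: "is_derivation D \<Longrightarrow> fls_map_coeffs D phiL = phiD D"
  by (rule fls_eqI)
    (simp add: fls_map_coeffs_nth derivation_0 derivation_1 derivation_add phiL_def phiD_def)

lemma Zser_vanishes_below: "fls_vanishes_below (-6) Zser"
proof -
  have phi: "fls_vanishes_below (-1) phiL"
    by (simp add: fls_vanishes_below_def phiL_def)
  then have psi: "fls_vanishes_below (-2) (fls_deriv phiL)"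
    using fls_vanishes_below_deriv by fastforce
  have "fls_vanishes_below (-2) Pfac"
    unfolding Pfac_def power2_eq_square
    by (intro fls_vanishes_below_diff fls_vanishes_below_mult[of "-1" _ "-1", simplified] phi
        fls_vanishes_below_mono[OF fls_vanishes_below_mult[OF fls_vanishes_below_const phi]]
        fls_vanishes_below_mono[OF fls_vanishes_below_const]) simp_all
  then show ?thesis
    unfolding Zser_def power2_eq_square
    using fls_vanishes_below_mult[OF _ fls_vanishes_below_mult[OF psi psi]] by fastforce
qed

lemma gt_linearized_Zser:
  assumes "covering_data phx phy"
  shows "gt_linearized (fls_map_coeffs (tDx phx)) (fls_map_coeffs (tDy phy))
           (fls_const zx) (fls_const zy) (fls_const zxx) (fls_const zxy) Zser = 0"
proof -
  let ?R = "- phiD (tDx phx)"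
  have P_R: "Pfac * ?R = 1" and P_Y: "Pfac * phiD (tDy phy) = - (phiL - fls_const zx)"
    using assms by (simp_all add: covering_data_def)
  have "phiD (tDy phy) = (Pfac * ?R) * phiD (tDy phy)"
    by (simp only: P_R mult_1)
  also have "\<dots> = ?R * (Pfac * phiD (tDy phy))"
    by (simp only: ac_simps)
  also have "\<dots> = - ((phiL - fls_const zx) * ?R)"
    by (simp add: P_Y algebra_simps)
  finally have Y: "phiD (tDy phy) = - ((phiL - fls_const zx) * ?R)" .
  interpret gt_covering_ring "fls_map_coeffs (tDx phx)" "fls_map_coeffs (tDy phy)" fls_deriv
    "fls_const zx" "fls_const zy" "fls_const zxx" "fls_const zxy"
    "fls_const (cvar (Zv 3 False))" "fls_const (cvar (Zv 2 True))"
    phiL "fls_deriv phiL" Pfac ?R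
    by unfold_locales
      (simp_all only: tDx_derivation tDy_derivation fls_map_coeffs_derivation fls_deriv_derivation
        fls_deriv_map_coeffs fls_map_coeffs_phiL fls_map_coeffs_const tDx_jet tDy_jet
        Pfac_def[symmetric] P_R Y minus_minus fls_deriv_const fls_minus_const[symmetric]
        fls_const_mult_const[symmetric] fls_const_1 simp_thms)
  show ?thesis
    unfolding Zser_def by (rule gt_linearized_Z_eq_0)
qed

theorem mainTheorem11:
  fixes phx phy :: "nat \<Rightarrow> jpoly"
  assumes "covering_data phx phy"
  shows "(\<forall>m::int. m < -6 \<longrightarrow> fls_nth Zser m = 0) \<and>
         (\<forall>n::int. n \<ge> -4 \<longrightarrow>
            (let W = fls_nth Zser (n - 2) in
               tDy phy (tDy phy W) + zx * tDx phx (tDy phy W) - zy * tDx phx (tDx phx W)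
               + zxy * tDx phx W - zxx * tDy phy W = 0))"
proof
  show "\<forall>m::int. m < -6 \<longrightarrow> fls_nth Zser m = 0"
    using Zser_vanishes_below by (simp add: fls_vanishes_below_def)
  have "gt_linearized (tDx phx) (tDy phy) zx zy zxx zxy (Zser $$ k) = 0" for k
    using fls_nth_gt_linearized[OF tDx_derivation[of phx] tDy_derivation[of phy],
        where p = zx and q = zy and r = zxx and s = zxy and f = Zser and n = k]
    by (simp add: gt_linearized_Zser[OF assms])
  then show "\<forall>n::int. n \<ge> -4 \<longrightarrow>
            (let W = fls_nth Zser (n - 2) in
               tDy phy (tDy phy W) + zx * tDx phx (tDy phy W) - zy * tDx phx (tDx phx W)
               + zxy * tDx phx W - zxx * tDy phy W = 0)"
    by (simp add: gt_linearized_def)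
qed

end
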